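(* Let $p$ be a prime, $n\ge1$, $\mathbb{F}=\mathbb{F}_{p^n}$, $F=p^n$, and $f,g:\mathbb{F}\to[0,1]$. Let $k$ be an integer with $2\le k\le F$, let $A$ be a set of $k$ points at which $|\hat f|$ takes its $k$ largest values (i.e. $|\hat f(a)|\ge|\hat f(b)|$ for all $a\in A$, $b\notin A$), and $B=A-A$. Let $n'$ be an integer with $$1+\frac{\log\binom{k}{2}}{\log p}\ \le\ n'\ <\ 2+\frac{\log\binom{k}{2}}{\log p},\qquad n'\le n,$$ and let $S$ be the set of all $\mathbb{F}_p$-subspaces of $\mathbb{F}$ of dimension $n'$. Suppose $\mathbb{E}(g)>8p^{-1/2}k^{-1}$. Then there exists $W\in S$ such that (i) $B\cap W^\perp=\{0\}$, and (ii) at least $F/4$ elements $t\in\mathbb{F}$ satisfy $\sum_{m\in t+W}g(m)\ge \mathbb{E}(g)|W|/2$.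
   Context: Identify $\mathbb{F}$ with $\mathbb{F}_p^n$ via a fixed standard $\mathbb{F}_p$-basis and let $a\cdot m$ be the dot product; $W^\perp=\{v: v\cdot w=0\ \forall w\in W\}$. With $\omega=e^{2\pi i/p}$, $\hat f(a)=\sum_m f(m)\omega^{a\cdot m}$. $\mathbb{E}(g)=F^{-1}\sum_m g(m)$. *)

theory Defs
  imports Complex_Main "HOL-Computational_Algebra.Primes"
begin

text \<open>The field F_{p^n} is identified with F_p^n: vectors are functions nat => int,
  with components in {0..<p} at indices < n and 0 elsewhere.\<close>

definition Fvec :: "nat \<Rightarrow> nat \<Rightarrow> (nat \<Rightarrow> int) set" where
  "Fvec p n = {v. (\<forall>i<n. 0 \<le> v i \<and> v i < int p) \<and> (\<forall>i\<ge>n. v i = 0)}"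

definition vzero :: "nat \<Rightarrow> int" where "vzero = (\<lambda>i. 0)"

definition vadd :: "nat \<Rightarrow> (nat \<Rightarrow> int) \<Rightarrow> (nat \<Rightarrow> int) \<Rightarrow> (nat \<Rightarrow> int)" where
  "vadd p u v = (\<lambda>i. (u i + v i) mod int p)"

definition vsub :: "nat \<Rightarrow> (nat \<Rightarrow> int) \<Rightarrow> (nat \<Rightarrow> int) \<Rightarrow> (nat \<Rightarrow> int)" where
  "vsub p u v = (\<lambda>i. (u i - v i) mod int p)"

definition smul :: "nat \<Rightarrow> int \<Rightarrow> (nat \<Rightarrow> int) \<Rightarrow> (nat \<Rightarrow> int)" where
  "smul p c v = (\<lambda>i. (c * v i) mod int p)"

definition dotp :: "nat \<Rightarrow> nat \<Rightarrow> (nat \<Rightarrow> int) \<Rightarrow> (nat \<Rightarrow> int) \<Rightarrow> int" where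
  "dotp p n a m = (\<Sum>i<n. a i * m i) mod int p"

definition omega :: "nat \<Rightarrow> complex" where
  "omega p = exp (2 * pi * \<i> / of_nat p)"

definition fourier :: "nat \<Rightarrow> nat \<Rightarrow> ((nat \<Rightarrow> int) \<Rightarrow> real) \<Rightarrow> (nat \<Rightarrow> int) \<Rightarrow> complex" where
  "fourier p n f a = (\<Sum>m\<in>Fvec p n. of_real (f m) * omega p ^ nat (dotp p n a m))"

definition expect :: "nat \<Rightarrow> nat \<Rightarrow> ((nat \<Rightarrow> int) \<Rightarrow> real) \<Rightarrow> real" where
  "expect p n g = (\<Sum>m\<in>Fvec p n. g m) / real (p ^ n)"

definition is_subspace :: "nat \<Rightarrow> nat \<Rightarrow> (nat \<Rightarrow> int) set \<Rightarrow> bool" where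
  "is_subspace p n W \<longleftrightarrow> W \<subseteq> Fvec p n \<and> vzero \<in> W \<and>
     (\<forall>u\<in>W. \<forall>v\<in>W. vadd p u v \<in> W) \<and> (\<forall>c\<in>{0..<int p}. \<forall>v\<in>W. smul p c v \<in> W)"

definition subspace_dim :: "nat \<Rightarrow> nat \<Rightarrow> (nat \<Rightarrow> int) set \<Rightarrow> nat \<Rightarrow> bool" where
  "subspace_dim p n W d \<longleftrightarrow> is_subspace p n W \<and> card W = p ^ d"

definition perp :: "nat \<Rightarrow> nat \<Rightarrow> (nat \<Rightarrow> int) set \<Rightarrow> (nat \<Rightarrow> int) set" where
  "perp p n W = {v \<in> Fvec p n. \<forall>w\<in>W. dotp p n v w = 0}"

definition translate :: "nat \<Rightarrow> (nat \<Rightarrow> int) \<Rightarrow> (nat \<Rightarrow> int) set \<Rightarrow> (nat \<Rightarrow> int) set" where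
  "translate p t W = vadd p t ` W"

end

theory Submission
  imports Defs "HOL-Number_Theory.Cong" "HOL-Library.FuncSet"
begin

text \<open>The subspace is found among the graphs
  \<open>W\<^sub>M = {x. x i \<equiv> \<Sum>j<n'. M (i, j) * x j (mod p) for n' \<le> i < n}\<close> of linear maps
  \<open>(\<bbbF>\<^sub>p) ^ n' \<rightarrow> (\<bbbF>\<^sub>p) ^ (n - n')\<close>, by counting over all matrices \<open>M\<close>. For fixed
  \<open>z \<noteq> 0\<close>, both \<open>z \<in> W\<^sub>M\<close> and \<open>z \<in> W\<^sub>M\<^sup>\<bottom>\<close> are linear systems in the entries of \<open>M\<close> with one pivot
  per equation, so they hold for at most a fraction \<open>p ^ n' / p ^ n\<close>, resp. \<open>1 / p ^ n'\<close>,
  of the matrices. With a union bound over the \<open>k choose 2\<close> pairs in \<open>A\<close>, the second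
  estimate controls (i). For (ii), the variance of the coset sums \<open>t \<mapsto> \<Sum>m\<in>t + W. g m\<close>
  is \<open>|W|\<close> times the sum over \<open>W\<close> of the autocorrelation of \<open>g\<close>, minus
  \<open>|W|\<^sup>2 (\<Sum>g)\<^sup>2 / p ^ n\<close>. Averaged over \<open>M\<close>, the first estimate cancels this
  subtracted term against the contribution of all \<open>z \<noteq> 0\<close>, leaving at most \<open>|W| \<Sum>g\<close>.
  By Chebyshev, more than 3/4 of the coset sums lie below half their mean for at most a
  fraction \<open>16 / (3 p ^ n' \<bbbE>(g))\<close> of the matrices. The lower bounds on \<open>n'\<close> and
  \<open>\<bbbE>(g)\<close> make the two fractions sum to less than 1.\<close>

section \<open>Vectors over the integers modulo p\<close>

definition vecs_on :: "nat \<Rightarrow> 'a set \<Rightarrow> ('a \<Rightarrow> int) set" where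
  "vecs_on p I = {v. (\<forall>i\<in>I. 0 \<le> v i \<and> v i < int p) \<and> (\<forall>i. i \<notin> I \<longrightarrow> v i = 0)}"

lemma Fvec_eq_vecs_on: "Fvec p n = vecs_on p {..<n}"
  unfolding Fvec_def vecs_on_def by auto

lemma card_vecs_on:
  assumes "finite I"
  shows "card (vecs_on p I) = p ^ card I"
proof -
  have "bij_betw (\<lambda>v. restrict v I) (vecs_on p I) (PiE I (\<lambda>_. {0..<int p}))"
    by (rule bij_betw_byWitness[where f'="\<lambda>f i. if i \<in> I then f i else 0"])
       (auto simp: vecs_on_def fun_eq_iff PiE_def extensional_def)
  then show ?thesis
    using assms by (simp add: bij_betw_same_card card_PiE)
qed

lemma finite_vecs_on: "finite I \<Longrightarrow> 0 < p \<Longrightarrow> finite (vecs_on p I)"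
  using card_vecs_on[of I p] by (metis card.infinite nat_zero_less_power_iff neq0_conv)

lemma finite_Fvec: "0 < p \<Longrightarrow> finite (Fvec p n)"
  by (simp add: Fvec_eq_vecs_on finite_vecs_on)

lemma card_Fvec: "card (Fvec p n) = p ^ n"
  by (simp add: Fvec_eq_vecs_on card_vecs_on)

lemma Fvec_mod: "v \<in> Fvec p n \<Longrightarrow> v i mod int p = v i"
  unfolding Fvec_def by (cases "i < n") auto

lemma vzero_Fvec: "0 < p \<Longrightarrow> vzero \<in> Fvec p n"
  unfolding Fvec_def vzero_def by auto

lemma vadd_Fvec: "0 < p \<Longrightarrow> u \<in> Fvec p n \<Longrightarrow> v \<in> Fvec p n \<Longrightarrow> vadd p u v \<in> Fvec p n"
  unfolding Fvec_def vadd_def by auto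

lemma vsub_Fvec: "0 < p \<Longrightarrow> u \<in> Fvec p n \<Longrightarrow> v \<in> Fvec p n \<Longrightarrow> vsub p u v \<in> Fvec p n"
  unfolding Fvec_def vsub_def by auto

lemma vadd_comm: "vadd p u v = vadd p v u"
  unfolding vadd_def by (simp add: add.commute)

lemma vadd_vzero: "t \<in> Fvec p n \<Longrightarrow> vadd p t vzero = t"
  unfolding vadd_def vzero_def by (simp add: Fvec_mod)

lemma vadd_vsub_cancel: "u \<in> Fvec p n \<Longrightarrow> vadd p (vsub p u w) w = u"
  unfolding vadd_def vsub_def by (simp add: mod_add_left_eq Fvec_mod)

lemma vsub_vadd_cancel: "t \<in> Fvec p n \<Longrightarrow> vsub p (vadd p t w) w = t"
  unfolding vadd_def vsub_def by (simp add: mod_diff_left_eq Fvec_mod)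

lemma vadd_vadd_vsub: "vadd p (vadd p t w) (vsub p w' w) = vadd p t w'"
  unfolding vadd_def vsub_def by (simp add: mod_add_eq)

lemma vsub_self: "vsub p a a = vzero"
  by (simp add: vsub_def vzero_def)

lemma vsub_eq_vzero_iff:
  assumes "u \<in> Fvec p n" "v \<in> Fvec p n"
  shows "vsub p u v = vzero \<longleftrightarrow> u = v"
proof
  assume "vsub p u v = vzero"
  then have "u = vadd p v vzero"
    using vadd_vsub_cancel[OF assms(1), of v] by (simp add: vadd_comm)
  then show "u = v"
    using vadd_vzero[OF assms(2)] by simp
qed (simp add: vsub_self)

lemma sum_mult_mod_right:
  fixes m :: int
  shows "(\<Sum>j\<in>J. c j * (a j mod m)) mod m = (\<Sum>j\<in>J. c j * a j) mod m"
proof -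
  have "(\<Sum>j\<in>J. c j * (a j mod m)) mod m = (\<Sum>j\<in>J. c j * (a j mod m) mod m) mod m"
    by (simp add: mod_sum_eq)
  also have "\<dots> = (\<Sum>j\<in>J. c j * a j) mod m"
    by (simp add: mod_mult_right_eq mod_sum_eq)
  finally show ?thesis .
qed

lemma sum_Fvec_vadd_right:
  assumes "0 < p" "w \<in> Fvec p n"
  shows "(\<Sum>t\<in>Fvec p n. f (vadd p t w)) = (\<Sum>x\<in>Fvec p n. f x)"
proof -
  have "bij_betw (\<lambda>t. vadd p t w) (Fvec p n) (Fvec p n)"
    by (rule bij_betw_byWitness[where f'="\<lambda>x. vsub p x w"])
       (use assms in \<open>auto simp: vadd_vsub_cancel vsub_vadd_cancel vadd_Fvec vsub_Fvec\<close>)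
  then show ?thesis
    by (rule sum.reindex_bij_betw)
qed

lemma vsub_mem_subspace:
  assumes "0 < p" "is_subspace p n W" "u \<in> W" "v \<in> W"
  shows "vsub p u v \<in> W"
proof -
  have "(u i + (int p - 1) * v i mod int p) mod int p = (u i - v i) mod int p" for i
  proof -
    have "(u i + (int p - 1) * v i mod int p) mod int p = (u i + (int p - 1) * v i) mod int p"
      by (rule mod_add_right_eq)
    also have "u i + (int p - 1) * v i = (u i - v i) + v i * int p"
      by (simp add: algebra_simps)
    finally show ?thesis
      by simp
  qed
  then have "vsub p u v = vadd p u (smul p (int p - 1) v)"
    by (simp add: vsub_def vadd_def smul_def)
  moreover have "int p - 1 \<in> {0..<int p}"
    using assms(1) by simp
  ultimately show ?thesis
    using assms(2-4) unfolding is_subspace_def by metis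
qed

lemma sum_translate:
  assumes "W \<subseteq> Fvec p n"
  shows "(\<Sum>m\<in>translate p t W. g m) = (\<Sum>w\<in>W. g (vadd p t w))"
proof -
  have "inj_on (vadd p t) W"
  proof
    fix u v assume "u \<in> W" "v \<in> W" "vadd p t u = vadd p t v"
    then show "u = v"
      using assms vsub_vadd_cancel[of u p n t] vsub_vadd_cancel[of v p n t] by (auto simp: vadd_comm)
  qed
  then show ?thesis
    unfolding translate_def by (simp add: sum.reindex)
qed

lemma dotp_vsub: "dotp p n (vsub p a b) w = (\<Sum>i<n. w i * (a i - b i)) mod int p"
  unfolding dotp_def vsub_def using sum_mult_mod_right[of w] by (simp add: mult.commute)

lemma vsub_mem_perp_commute:
  assumes "0 < p" "a \<in> Fvec p n" "b \<in> Fvec p n"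
  shows "vsub p b a \<in> perp p n W \<longleftrightarrow> vsub p a b \<in> perp p n W"
proof -
  have "(\<Sum>i<n. w i * (b i - a i)) = - (\<Sum>i<n. w i * (a i - b i))" for w :: "nat \<Rightarrow> int"
    by (simp add: sum_negf[symmetric] algebra_simps)
  then have "dotp p n (vsub p b a) w = 0 \<longleftrightarrow> dotp p n (vsub p a b) w = 0" for w
    by (simp add: dotp_vsub mod_eq_0_iff_dvd)
  with assms show ?thesis
    unfolding perp_def by (auto simp: vsub_Fvec)
qed

section \<open>Graph subspaces\<close>

definition graph_subspace :: "nat \<Rightarrow> nat \<Rightarrow> nat \<Rightarrow> (nat \<times> nat \<Rightarrow> int) \<Rightarrow> (nat \<Rightarrow> int) set" where
  "graph_subspace p n d M = {x \<in> Fvec p n. \<forall>i\<in>{d..<n}. x i = (\<Sum>j<d. M (i, j) * x j) mod int p}"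

abbreviation graph_matrices :: "nat \<Rightarrow> nat \<Rightarrow> nat \<Rightarrow> (nat \<times> nat \<Rightarrow> int) set" where
  "graph_matrices p n d \<equiv> vecs_on p ({d..<n} \<times> {..<d})"

lemma graph_subspace_subset: "graph_subspace p n d M \<subseteq> Fvec p n"
  unfolding graph_subspace_def by auto

lemma graph_subspace_lincomb:
  assumes "0 < p" "x \<in> graph_subspace p n d M" "y \<in> graph_subspace p n d M"
  shows "(\<lambda>i. (c * x i + c' * y i) mod int p) \<in> graph_subspace p n d M"
proof -
  have "(c * x i + c' * y i) mod int p
          = (\<Sum>j<d. M (i, j) * ((c * x j + c' * y j) mod int p)) mod int p" if "i \<in> {d..<n}" for i
  proof -
    have "x i = (\<Sum>j<d. M (i, j) * x j) mod int p" "y i = (\<Sum>j<d. M (i, j) * y j) mod int p"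
      using assms(2,3) that unfolding graph_subspace_def by blast+
    then have "(c * x i + c' * y i) mod int p
        = (c * ((\<Sum>j<d. M (i, j) * x j) mod int p) + c' * ((\<Sum>j<d. M (i, j) * y j) mod int p)) mod int p"
      by (simp only:)
    also have "\<dots> = (c * (\<Sum>j<d. M (i, j) * x j) + c' * (\<Sum>j<d. M (i, j) * y j)) mod int p"
      by (intro mod_add_cong mod_mult_right_eq)
    also have "\<dots> = (\<Sum>j<d. M (i, j) * (c * x j + c' * y j)) mod int p"
      by (simp add: sum.distrib sum_distrib_left algebra_simps)
    finally show ?thesis
      by (simp add: sum_mult_mod_right)
  qed
  moreover have "(\<lambda>i. (c * x i + c' * y i) mod int p) \<in> Fvec p n"
  proof -
    have "x \<in> Fvec p n" "y \<in> Fvec p n"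
      using assms(2,3) graph_subspace_subset by blast+
    then show ?thesis
      using assms(1) unfolding Fvec_def by auto
  qed
  ultimately show ?thesis
    unfolding graph_subspace_def by (simp only: mem_Collect_eq) blast
qed

lemma is_subspace_graph_subspace:
  assumes "0 < p"
  shows "is_subspace p n (graph_subspace p n d M)"
  unfolding is_subspace_def
proof (intro conjI ballI)
  show "vzero \<in> graph_subspace p n d M"
    using vzero_Fvec[OF assms] by (simp add: graph_subspace_def vzero_def)
  show "vadd p u v \<in> graph_subspace p n d M" if "u \<in> graph_subspace p n d M" "v \<in> graph_subspace p n d M" for u v
    using graph_subspace_lincomb[OF assms that, of 1 1] by (simp add: vadd_def)
  show "smul p c v \<in> graph_subspace p n d M" if "v \<in> graph_subspace p n d M" for c v
    using graph_subspace_lincomb[OF assms that that, of c 0] by (simp add: smul_def)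
qed (rule graph_subspace_subset)

lemma graph_subspace_eqI:
  assumes x: "x \<in> graph_subspace p n d M" and y: "y \<in> graph_subspace p n d M"
    and eq: "\<And>j. j < d \<Longrightarrow> x j = y j"
  shows "x = y"
proof
  fix i
  consider "i < d" | "i \<in> {d..<n}" | "n \<le> i"
    by fastforce
  then show "x i = y i"
  proof cases
    case 2
    have "(\<Sum>j<d. M (i, j) * x j) = (\<Sum>j<d. M (i, j) * y j)"
      using eq by simp
    with 2 x y show ?thesis
      unfolding graph_subspace_def by simp
  next
    case 3
    have "x \<in> Fvec p n" "y \<in> Fvec p n"
      using x y graph_subspace_subset by blast+
    with 3 show ?thesis
      by (simp add: Fvec_def)
  qed (rule eq)
qed

lemma card_graph_subspace:
  assumes "0 < p" "d \<le> n"
  shows "card (graph_subspace p n d M) = p ^ d"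
proof -
  define extend where "extend u i = (if i < d then u i else if i < n then (\<Sum>j<d. M (i, j) * u j) mod int p else 0)"
    for u :: "nat \<Rightarrow> int" and i
  have extend: "extend u \<in> graph_subspace p n d M" if "u \<in> Fvec p d" for u
  proof -
    have "(\<Sum>j<d. M (i, j) * extend u j) = (\<Sum>j<d. M (i, j) * u j)" for i
      by (simp add: extend_def)
    then show ?thesis
      using that assms unfolding graph_subspace_def Fvec_def extend_def by auto
  qed
  have "bij_betw (\<lambda>x i. if i < d then x i else 0) (graph_subspace p n d M) (Fvec p d)"
  proof (rule bij_betw_byWitness[where f'=extend])
    show "\<forall>x\<in>graph_subspace p n d M. extend (\<lambda>i. if i < d then x i else 0) = x"
    proof
      fix x assume x: "x \<in> graph_subspace p n d M"
      have "(\<lambda>i. if i < d then x i else 0) \<in> Fvec p d"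
        using x graph_subspace_subset assms(2) unfolding Fvec_def by fastforce
      with x show "extend (\<lambda>i. if i < d then x i else 0) = x"
        by (intro graph_subspace_eqI[OF extend]) (simp_all add: extend_def)
    qed
    show "\<forall>u\<in>Fvec p d. (\<lambda>i. if i < d then extend u i else 0) = u"
      unfolding Fvec_def extend_def by auto
    show "(\<lambda>x i. if i < d then x i else 0) ` graph_subspace p n d M \<subseteq> Fvec p d"
      using graph_subspace_subset assms(2) unfolding Fvec_def by fastforce
  qed (use extend in blast)
  then show ?thesis
    by (simp add: bij_betw_same_card card_Fvec)
qed

lemma subspace_dim_graph_subspace:
  "0 < p \<Longrightarrow> d \<le> n \<Longrightarrow> subspace_dim p n (graph_subspace p n d M) d"
  by (simp add: subspace_dim_def is_subspace_graph_subspace card_graph_subspace)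

lemma perp_graph_subspace_equation:
  assumes p: "1 < p" and d: "d \<le> n" "j < d" and b: "b \<in> perp p n (graph_subspace p n d M)"
  shows "(b j + (\<Sum>i\<in>{d..<n}. b i * M (i, j))) mod int p = 0"
proof -
  define w where "w i = (if i = j then 1 else if i \<in> {d..<n} then M (i, j) mod int p else 0)" for i
  have w_low: "w i = (if i = j then 1 else 0)" if "i < d" for i
    using that by (simp add: w_def)
  have w_high: "w i = M (i, j) mod int p" if "i \<in> {d..<n}" for i
    using that d(2) by (simp add: w_def)
  have "(\<Sum>j'<d. M (i, j') * w j') = (\<Sum>j'<d. if j' = j then M (i, j) else 0)" for i
    by (rule sum.cong) (simp_all add: w_low)
  then have row: "(\<Sum>j'<d. M (i, j') * w j') = M (i, j)" for i
    using d(2) by simp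
  have "w \<in> Fvec p n"
    using p d unfolding Fvec_def w_def by auto
  then have "w \<in> graph_subspace p n d M"
    unfolding graph_subspace_def by (simp add: row w_high)
  then have "(\<Sum>i<n. b i * w i) mod int p = 0"
    using b unfolding perp_def dotp_def by blast
  moreover have "(\<Sum>i<n. b i * w i) = b j + (\<Sum>i\<in>{d..<n}. b i * (M (i, j) mod int p))"
  proof -
    have "(\<Sum>i<d. b i * w i) = (\<Sum>i<d. if i = j then b j else 0)"
      by (rule sum.cong) (simp_all add: w_low)
    moreover have "(\<Sum>i\<in>{d..<n}. b i * w i) = (\<Sum>i\<in>{d..<n}. b i * (M (i, j) mod int p))"
      by (rule sum.cong) (simp_all add: w_high)
    ultimately show ?thesis
      using sum.atLeastLessThan_concat[of 0 d n "\<lambda>i. b i * w i"] d by (simp add: lessThan_atLeast0)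
  qed
  moreover have "(b j + (\<Sum>i\<in>{d..<n}. b i * M (i, j))) mod int p
      = (b j + (\<Sum>i\<in>{d..<n}. b i * (M (i, j) mod int p))) mod int p"
    by (subst (1 2) mod_add_right_eq[symmetric]) (simp only: sum_mult_mod_right)
  ultimately show ?thesis
    by simp
qed

lemma perp_graph_subspace_eq_vzero:
  assumes p: "1 < p" and d: "d \<le> n" and b: "b \<in> Fvec p n" "b \<in> perp p n (graph_subspace p n d M)"
    and high: "\<forall>i\<in>{d..<n}. b i = 0"
  shows "b = vzero"
proof
  fix i
  show "b i = vzero i"
  proof (cases "i < d")
    case True
    then have "b i mod int p = 0"
      using perp_graph_subspace_equation[OF p d True b(2)] high by simp
    then show ?thesis
      using Fvec_mod[OF b(1)] by (simp add: vzero_def)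
  next
    case False
    then show ?thesis
      using high b(1) by (cases "i < n") (auto simp: Fvec_def vzero_def)
  qed
qed

section \<open>Counting graph matrices\<close>

lemma pivot_entry_cong:
  fixes a :: "'r \<Rightarrow> 'i \<Rightarrow> int" and c :: "'r \<Rightarrow> int" and e :: "'r \<Rightarrow> 'i"
  assumes p: "prime p" and I: "finite I" and e: "inj_on e R" "e ` R \<subseteq> I"
    and pivot: "\<And>r r'. r \<in> R \<Longrightarrow> r' \<in> R \<Longrightarrow> a r (e r') = (if r' = r then u else 0)"
    and u: "\<not> int p dvd u" and r: "r \<in> R"
    and M: "(c r + (\<Sum>x\<in>I. a r x * M x)) mod int p = 0" "(c r + (\<Sum>x\<in>I. a r x * M' x)) mod int p = 0"
    and off: "\<And>x. x \<in> I - e ` R \<Longrightarrow> M x = M' x"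
  shows "[M (e r) = M' (e r)] (mod int p)"
proof -
  have "int p dvd (c r + (\<Sum>x\<in>I. a r x * M x)) - (c r + (\<Sum>x\<in>I. a r x * M' x))"
    using M by (intro dvd_diff) (simp_all add: dvd_eq_mod_eq_0)
  also have "(c r + (\<Sum>x\<in>I. a r x * M x)) - (c r + (\<Sum>x\<in>I. a r x * M' x)) = (\<Sum>x\<in>e ` R. a r x * (M x - M' x))"
    using e(2) off by (simp add: sum_subtractf[symmetric] right_diff_distrib[symmetric]
        sum.mono_neutral_right[OF I e(2)])
  also have "\<dots> = (\<Sum>r'\<in>R. a r (e r') * (M (e r') - M' (e r')))"
    using e(1) by (simp add: sum.reindex)
  also have "\<dots> = (\<Sum>r'\<in>R. if r' = r then u * (M (e r) - M' (e r)) else 0)"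
    by (rule sum.cong) (simp_all add: pivot r)
  also have "\<dots> = u * (M (e r) - M' (e r))"
    using r finite_imageD[OF finite_subset[OF e(2) I] e(1)] by simp
  finally show ?thesis
    using p u by (simp add: prime_dvd_mult_iff cong_iff_dvd_diff)
qed

text \<open>A solution is determined by its entries off the pivots \<open>e ` R\<close>.\<close>
lemma card_solutions_with_pivots:
  fixes a :: "'r \<Rightarrow> 'i \<Rightarrow> int" and c :: "'r \<Rightarrow> int" and e :: "'r \<Rightarrow> 'i"
  assumes p: "prime p" and I: "finite I" and e: "inj_on e R" "e ` R \<subseteq> I"
    and pivot: "\<And>r r'. r \<in> R \<Longrightarrow> r' \<in> R \<Longrightarrow> a r (e r') = (if r' = r then u else 0)"
    and u: "\<not> int p dvd u"
  shows "p ^ card R * card {M \<in> vecs_on p I. \<forall>r\<in>R. (c r + (\<Sum>x\<in>I. a r x * M x)) mod int p = 0}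
           \<le> p ^ card I"
proof -
  let ?S = "{M \<in> vecs_on p I. \<forall>r\<in>R. (c r + (\<Sum>x\<in>I. a r x * M x)) mod int p = 0}"
  let ?J = "I - e ` R"
  let ?restr = "\<lambda>M x. if x \<in> ?J then M x else 0"
  have "inj_on ?restr ?S"
  proof (rule inj_onI, rule ext)
    fix M M' x assume M: "M \<in> ?S" and M': "M' \<in> ?S" and eq: "?restr M = ?restr M'"
    have off: "M y = M' y" if "y \<notin> e ` R" for y
      using fun_cong[OF eq, of y] M M' that by (cases "y \<in> I") (auto simp: vecs_on_def)
    show "M x = M' x"
    proof (cases "x \<in> e ` R")
      case True
      then obtain r where r: "r \<in> R" "x = e r"
        by blast
      with M M' off have "[M x = M' x] (mod int p)"
        using pivot_entry_cong[OF p I e pivot u, of r c M M'] by simp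
      then show ?thesis
        using M M' r e(2) by (auto simp: vecs_on_def intro: cong_less_imp_eq_int)
    qed (rule off)
  qed
  moreover have "?restr ` ?S \<subseteq> vecs_on p ?J"
    by (auto simp: vecs_on_def)
  ultimately have "card ?S \<le> card (vecs_on p ?J)"
    using I prime_gt_0_nat[OF p] by (intro card_inj_on_le) (auto intro: finite_vecs_on)
  also have "\<dots> = p ^ (card I - card R)"
    using I e by (simp add: card_vecs_on card_Diff_subset card_image finite_subset)
  finally have "p ^ card R * card ?S \<le> p ^ card R * p ^ (card I - card R)"
    by simp
  also have "\<dots> = p ^ card I"
    using e I card_mono[OF I e(2)] by (simp add: card_image flip: power_add)
  finally show ?thesis .
qed

lemma sum_row_of_matrix:
  fixes M :: "'a \<times> 'b \<Rightarrow> int"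
  assumes "finite A" "finite B" "i \<in> A"
  shows "(\<Sum>x\<in>A \<times> B. (case x of (i', j) \<Rightarrow> if i' = i then z j else 0) * M x) = (\<Sum>j\<in>B. M (i, j) * z j)"
proof -
  have "(\<Sum>j\<in>B. (if i' = i then z j else 0) * M (i', j)) = (if i' = i then \<Sum>j\<in>B. M (i, j) * z j else 0)" for i'
    by (simp add: mult.commute)
  then show ?thesis
    using assms by (simp add: sum.cartesian_product')
qed

lemma sum_col_of_matrix:
  fixes M :: "'a \<times> 'b \<Rightarrow> int"
  assumes "finite A" "finite B" "j \<in> B"
  shows "(\<Sum>x\<in>A \<times> B. (case x of (i, j') \<Rightarrow> if j' = j then b i else 0) * M x) = (\<Sum>i\<in>A. b i * M (i, j))"
proof -
  have "(\<Sum>j'\<in>B. (if j' = j then b i else 0) * M (i, j')) = b i * M (i, j)" for i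
    using assms by (simp add: if_distrib[of "\<lambda>x. x * _"] cong: if_cong)
  then show ?thesis
    by (simp add: sum.cartesian_product')
qed

lemma finite_graph_matrices: "0 < p \<Longrightarrow> finite (graph_matrices p n d)"
  by (simp add: finite_vecs_on)

lemma card_graph_matrices_containing:
  assumes p: "prime p" and z: "z \<in> Fvec p n" "z \<noteq> vzero"
  shows "p ^ (n - d) * card {M \<in> graph_matrices p n d. z \<in> graph_subspace p n d M}
           \<le> card (graph_matrices p n d)"
proof (cases "\<exists>j<d. z j \<noteq> 0")
  case False
  have "z \<notin> graph_subspace p n d M" for M
    using False z(2) graph_subspace_eqI[of z p n d M vzero] is_subspace_graph_subspace[of p n d M]
      prime_gt_0_nat[OF p] by (auto simp: is_subspace_def vzero_def)
  then show ?thesis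
    by simp
next
  case True
  then obtain j0 where j0: "j0 < d" "z j0 \<noteq> 0"
    by blast
  let ?I = "{d..<n} \<times> {..<d}"
  let ?a = "\<lambda>i (i', j). if i' = i then z j else 0"
  have "{M \<in> graph_matrices p n d. z \<in> graph_subspace p n d M}
          \<subseteq> {M \<in> graph_matrices p n d. \<forall>i\<in>{d..<n}. (- z i + (\<Sum>x\<in>?I. ?a i x * M x)) mod int p = 0}"
  proof (intro subsetI CollectI conjI ballI; elim CollectE conjE)
    fix M i assume "z \<in> graph_subspace p n d M" "i \<in> {d..<n}"
    then have "z i = (\<Sum>j<d. M (i, j) * z j) mod int p"
      unfolding graph_subspace_def by blast
    moreover have "(\<Sum>x\<in>?I. ?a i x * M x) = (\<Sum>j<d. M (i, j) * z j)"
      using \<open>i \<in> {d..<n}\<close> by (intro sum_row_of_matrix) auto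
    ultimately show "(- z i + (\<Sum>x\<in>?I. ?a i x * M x)) mod int p = 0"
      by (simp add: minus_mod_eq_mult_div)
  qed
  then have "card {M \<in> graph_matrices p n d. z \<in> graph_subspace p n d M}
      \<le> card {M \<in> graph_matrices p n d. \<forall>i\<in>{d..<n}. (- z i + (\<Sum>x\<in>?I. ?a i x * M x)) mod int p = 0}"
    using finite_graph_matrices prime_gt_0_nat[OF p] by (intro card_mono) auto
  moreover have "p ^ card {d..<n}
      * card {M \<in> graph_matrices p n d. \<forall>i\<in>{d..<n}. (- z i + (\<Sum>x\<in>?I. ?a i x * M x)) mod int p = 0}
      \<le> p ^ card ?I"
  proof (rule card_solutions_with_pivots[where e = "\<lambda>i. (i, j0)" and u = "z j0"])
    show "\<not> int p dvd z j0"
      using z(1) j0 by (cases "j0 < n") (auto simp: Fvec_def zdvd_not_zless)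
  qed (use p j0 in \<open>auto simp: inj_on_def\<close>)
  ultimately show ?thesis
    by (simp add: card_vecs_on) (meson le_trans mult_le_mono2)
qed

lemma card_graph_matrices_perp:
  assumes p: "prime p" and d: "d \<le> n" and b: "b \<in> Fvec p n" "b \<noteq> vzero"
  shows "p ^ d * card {M \<in> graph_matrices p n d. b \<in> perp p n (graph_subspace p n d M)}
           \<le> card (graph_matrices p n d)"
proof (cases "\<exists>i\<in>{d..<n}. b i \<noteq> 0")
  case False
  then have "b \<notin> perp p n (graph_subspace p n d M)" for M
    using perp_graph_subspace_eq_vzero[OF prime_gt_1_nat[OF p] d b(1)] b(2) by blast
  then show ?thesis
    by simp
next
  case True
  then obtain i0 where i0: "i0 \<in> {d..<n}" "b i0 \<noteq> 0"
    by blast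
  let ?I = "{d..<n} \<times> {..<d}"
  let ?a = "\<lambda>j (i, j'). if j' = j then b i else 0"
  have "{M \<in> graph_matrices p n d. b \<in> perp p n (graph_subspace p n d M)}
          \<subseteq> {M \<in> graph_matrices p n d. \<forall>j\<in>{..<d}. (b j + (\<Sum>x\<in>?I. ?a j x * M x)) mod int p = 0}"
  proof (intro subsetI CollectI conjI ballI; elim CollectE conjE)
    fix M j assume "b \<in> perp p n (graph_subspace p n d M)" "j \<in> {..<d}"
    moreover have "(\<Sum>x\<in>?I. ?a j x * M x) = (\<Sum>i\<in>{d..<n}. b i * M (i, j))"
      using \<open>j \<in> {..<d}\<close> by (intro sum_col_of_matrix) auto
    ultimately show "(b j + (\<Sum>x\<in>?I. ?a j x * M x)) mod int p = 0"
      using perp_graph_subspace_equation[OF prime_gt_1_nat[OF p] d] by simp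
  qed
  then have "card {M \<in> graph_matrices p n d. b \<in> perp p n (graph_subspace p n d M)}
      \<le> card {M \<in> graph_matrices p n d. \<forall>j\<in>{..<d}. (b j + (\<Sum>x\<in>?I. ?a j x * M x)) mod int p = 0}"
    using finite_graph_matrices prime_gt_0_nat[OF p] by (intro card_mono) auto
  moreover have "p ^ card {..<d}
      * card {M \<in> graph_matrices p n d. \<forall>j\<in>{..<d}. (b j + (\<Sum>x\<in>?I. ?a j x * M x)) mod int p = 0}
      \<le> p ^ card ?I"
  proof (rule card_solutions_with_pivots[where e = "\<lambda>j. (i0, j)" and u = "b i0"])
    show "\<not> int p dvd b i0"
      using b(1) i0 by (auto simp: Fvec_def zdvd_not_zless)
  qed (use p i0 in \<open>auto simp: inj_on_def\<close>)
  ultimately show ?thesis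
    by (simp add: card_vecs_on) (meson le_trans mult_le_mono2)
qed

lemma card_graph_matrices_perp_difference:
  assumes p: "prime p" and d: "d \<le> n" and A: "A \<subseteq> Fvec p n" "finite A"
  shows "p ^ d * card {M \<in> graph_matrices p n d.
                         \<exists>a\<in>A. \<exists>b\<in>A. a \<noteq> b \<and> vsub p a b \<in> perp p n (graph_subspace p n d M)}
           \<le> (card A choose 2) * card (graph_matrices p n d)"
proof -
  have p0: "0 < p"
    using p prime_gt_0_nat by blast
  let ?Ms = "graph_matrices p n d"
  let ?P = "{P. P \<subseteq> A \<and> card P = 2}"
  let ?E = "\<lambda>P. {M \<in> ?Ms. \<exists>a\<in>P. \<exists>b\<in>P. a \<noteq> b \<and> vsub p a b \<in> perp p n (graph_subspace p n d M)}"
  have fin: "finite ?P" "\<And>P. finite (?E P)"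
    using A(2) finite_graph_matrices[OF p0] by auto
  have E: "p ^ d * card (?E P) \<le> card ?Ms" if P: "P \<in> ?P" for P
  proof -
    obtain a b where ab: "P = {a, b}" "a \<noteq> b"
      using P by (auto simp: card_2_iff)
    then have ab_F: "a \<in> Fvec p n" "b \<in> Fvec p n"
      using P A(1) by auto
    have "?E P = {M \<in> ?Ms. vsub p a b \<in> perp p n (graph_subspace p n d M)}"
      using ab vsub_mem_perp_commute[OF p0 ab_F] by auto
    moreover have "vsub p a b \<noteq> vzero"
      using ab vsub_eq_vzero_iff[OF ab_F] by simp
    ultimately show ?thesis
      using card_graph_matrices_perp[OF p d vsub_Fvec[OF p0 ab_F]] by simp
  qed
  have "{M \<in> ?Ms. \<exists>a\<in>A. \<exists>b\<in>A. a \<noteq> b \<and> vsub p a b \<in> perp p n (graph_subspace p n d M)} \<subseteq> (\<Union>P\<in>?P. ?E P)"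
  proof
    fix M assume "M \<in> {M \<in> ?Ms. \<exists>a\<in>A. \<exists>b\<in>A. a \<noteq> b \<and> vsub p a b \<in> perp p n (graph_subspace p n d M)}"
    then obtain a b where "M \<in> ?Ms" "a \<in> A" "b \<in> A" "a \<noteq> b" "vsub p a b \<in> perp p n (graph_subspace p n d M)"
      by blast
    then show "M \<in> (\<Union>P\<in>?P. ?E P)"
      by (intro UN_I[of "{a, b}"]) auto
  qed
  then have "p ^ d * card {M \<in> ?Ms. \<exists>a\<in>A. \<exists>b\<in>A. a \<noteq> b \<and> vsub p a b \<in> perp p n (graph_subspace p n d M)}
      \<le> p ^ d * card (\<Union>P\<in>?P. ?E P)"
    using fin by (intro mult_le_mono2 card_mono) auto
  also have "\<dots> \<le> p ^ d * (\<Sum>P\<in>?P. card (?E P))"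
    using fin(1) by (intro mult_le_mono2 card_UN_le)
  also have "\<dots> \<le> (\<Sum>P\<in>?P. card ?Ms)"
    unfolding sum_distrib_left by (intro sum_mono E)
  also have "\<dots> = (card A choose 2) * card ?Ms"
    using n_subsets[OF A(2)] by simp
  finally show ?thesis .
qed

section \<open>Coset sums and autocorrelation\<close>

definition autocorr :: "nat \<Rightarrow> nat \<Rightarrow> ((nat \<Rightarrow> int) \<Rightarrow> real) \<Rightarrow> (nat \<Rightarrow> int) \<Rightarrow> real" where
  "autocorr p n g z = (\<Sum>x\<in>Fvec p n. g x * g (vadd p x z))"

lemma autocorr_nonneg:
  assumes "0 < p" "z \<in> Fvec p n" "\<forall>m\<in>Fvec p n. 0 \<le> g m"
  shows "0 \<le> autocorr p n g z"
  unfolding autocorr_def using assms by (auto intro!: sum_nonneg mult_nonneg_nonneg vadd_Fvec)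

lemma autocorr_vzero_le:
  assumes "\<forall>m\<in>Fvec p n. 0 \<le> g m \<and> g m \<le> 1"
  shows "autocorr p n g vzero \<le> (\<Sum>x\<in>Fvec p n. g x)"
  unfolding autocorr_def
proof (rule sum_mono)
  fix x assume "x \<in> Fvec p n"
  with assms show "g x * g (vadd p x vzero) \<le> g x"
    by (simp add: vadd_vzero mult_left_le)
qed

lemma sum_autocorr:
  assumes "0 < p"
  shows "(\<Sum>z\<in>Fvec p n. autocorr p n g z) = (\<Sum>x\<in>Fvec p n. g x)\<^sup>2"
proof -
  have "(\<Sum>z\<in>Fvec p n. autocorr p n g z) = (\<Sum>x\<in>Fvec p n. g x * (\<Sum>z\<in>Fvec p n. g (vadd p z x)))"
    unfolding autocorr_def by (subst sum.swap) (simp add: sum_distrib_left vadd_comm)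
  also have "\<dots> = (\<Sum>x\<in>Fvec p n. g x * (\<Sum>y\<in>Fvec p n. g y))"
    using assms by (simp add: sum_Fvec_vadd_right)
  finally show ?thesis
    by (simp add: power2_eq_square sum_distrib_right)
qed

lemma sum_coset_sums:
  assumes "0 < p" "W \<subseteq> Fvec p n"
  shows "(\<Sum>t\<in>Fvec p n. \<Sum>m\<in>translate p t W. g m) = real (card W) * (\<Sum>x\<in>Fvec p n. g x)"
proof -
  have "(\<Sum>t\<in>Fvec p n. \<Sum>m\<in>translate p t W. g m) = (\<Sum>w\<in>W. \<Sum>t\<in>Fvec p n. g (vadd p t w))"
    using assms(2) by (simp add: sum_translate sum.swap[of _ W])
  also have "\<dots> = (\<Sum>w\<in>W. \<Sum>x\<in>Fvec p n. g x)"
    using assms by (intro sum.cong refl sum_Fvec_vadd_right) auto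
  finally show ?thesis
    by simp
qed

lemma sum_coset_sums_squared:
  assumes p: "0 < p" and W: "is_subspace p n W"
  shows "(\<Sum>t\<in>Fvec p n. (\<Sum>m\<in>translate p t W. g m)\<^sup>2) = real (card W) * (\<Sum>z\<in>W. autocorr p n g z)"
proof -
  have WF: "W \<subseteq> Fvec p n"
    using W unfolding is_subspace_def by blast
  have inner: "(\<Sum>t\<in>Fvec p n. \<Sum>w'\<in>W. g (vadd p t w) * g (vadd p t w')) = (\<Sum>z\<in>W. autocorr p n g z)"
    if w: "w \<in> W" for w
  proof -
    have "(\<Sum>t\<in>Fvec p n. g (vadd p t w) * g (vadd p t w')) = autocorr p n g (vsub p w' w)" for w'
      using sum_Fvec_vadd_right[OF p, of w n "\<lambda>x. g x * g (vadd p x (vsub p w' w))"] w WF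
      by (auto simp: autocorr_def vadd_vadd_vsub)
    then have "(\<Sum>t\<in>Fvec p n. \<Sum>w'\<in>W. g (vadd p t w) * g (vadd p t w'))
        = (\<Sum>w'\<in>W. autocorr p n g (vsub p w' w))"
      by (subst sum.swap) simp
    also have "\<dots> = (\<Sum>z\<in>W. autocorr p n g z)"
    proof (rule sum.reindex_bij_betw)
      show "bij_betw (\<lambda>w'. vsub p w' w) W W"
        by (rule bij_betw_byWitness[where f'="\<lambda>z. vadd p z w"])
           (use w WF p W in \<open>auto simp: vadd_vsub_cancel vsub_vadd_cancel vsub_mem_subspace is_subspace_def\<close>)
    qed
    finally show ?thesis .
  qed
  have "(\<Sum>t\<in>Fvec p n. (\<Sum>m\<in>translate p t W. g m)\<^sup>2)
      = (\<Sum>w\<in>W. \<Sum>t\<in>Fvec p n. \<Sum>w'\<in>W. g (vadd p t w) * g (vadd p t w'))"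
    using WF by (subst sum.swap) (simp add: sum_translate power2_eq_square sum_product)
  also have "\<dots> = real (card W) * (\<Sum>z\<in>W. autocorr p n g z)"
    by (simp add: inner)
  finally show ?thesis .
qed

lemma coset_sums_variance:
  assumes p: "0 < p" and W: "is_subspace p n W"
  shows "(\<Sum>t\<in>Fvec p n. ((\<Sum>m\<in>translate p t W. g m) - expect p n g * real (card W))^2)
           = real (card W) * (\<Sum>z\<in>W. autocorr p n g z) - real (card W)^2 * (\<Sum>x\<in>Fvec p n. g x)^2 / real (p ^ n)"
proof -
  let ?S = "\<lambda>t. \<Sum>m\<in>translate p t W. g m"
  let ?q = "real (card W)" and ?N = "real (p ^ n)" and ?T = "\<Sum>x\<in>Fvec p n. g x"
  have WF: "W \<subseteq> Fvec p n"
    using W unfolding is_subspace_def by blast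
  let ?c = "?T / ?N * ?q"
  have "(\<Sum>t\<in>Fvec p n. (?S t - ?c)^2) = (\<Sum>t\<in>Fvec p n. (?S t)^2 - 2 * ?c * ?S t + ?c^2)"
    by (rule sum.cong) (simp_all add: power2_diff algebra_simps)
  also have "\<dots> = (\<Sum>t\<in>Fvec p n. (?S t)^2) - 2 * ?c * (\<Sum>t\<in>Fvec p n. ?S t) + ?N * ?c^2"
    by (simp only: sum.distrib sum_subtractf sum_distrib_left[symmetric] sum_constant card_Fvec)
  also have "\<dots> = ?q * (\<Sum>z\<in>W. autocorr p n g z) - 2 * ?c * (?q * ?T) + ?N * ?c^2"
    by (simp only: sum_coset_sums_squared[OF p W] sum_coset_sums[OF p WF])
  also have "\<dots> = ?q * (\<Sum>z\<in>W. autocorr p n g z) - ?q^2 * ?T^2 / ?N"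
    using p by (simp add: field_simps power2_eq_square)
  finally show ?thesis
    by (simp add: expect_def)
qed

lemma sum_graph_subspaces_eq_sum_card:
  fixes f :: "(nat \<Rightarrow> int) \<Rightarrow> real"
  assumes "0 < p"
  shows "(\<Sum>M\<in>graph_matrices p n d. \<Sum>z\<in>graph_subspace p n d M. f z)
           = (\<Sum>z\<in>Fvec p n. f z * real (card {M \<in> graph_matrices p n d. z \<in> graph_subspace p n d M}))"
proof -
  have "{z \<in> Fvec p n. z \<in> graph_subspace p n d M} = graph_subspace p n d M" for M
    using graph_subspace_subset by blast
  then have "(\<Sum>M\<in>graph_matrices p n d. \<Sum>z\<in>graph_subspace p n d M. f z)
      = (\<Sum>M\<in>graph_matrices p n d. \<Sum>z\<in>{z \<in> Fvec p n. z \<in> graph_subspace p n d M}. f z)"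
    by simp
  also have "\<dots> = (\<Sum>z\<in>Fvec p n. \<Sum>M\<in>{M \<in> graph_matrices p n d. z \<in> graph_subspace p n d M}. f z)"
    by (rule sum.swap_restrict) (use assms in \<open>simp_all add: finite_graph_matrices finite_Fvec\<close>)
  finally show ?thesis
    by (simp add: mult.commute)
qed

lemma sum_autocorr_graph_subspaces:
  assumes p: "prime p" and d: "d \<le> n" and g: "\<forall>m\<in>Fvec p n. 0 \<le> g m \<and> g m \<le> 1"
  shows "(\<Sum>M\<in>graph_matrices p n d. \<Sum>z\<in>graph_subspace p n d M. autocorr p n g z)
           \<le> real (card (graph_matrices p n d)) * (\<Sum>x\<in>Fvec p n. g x)
             + real (card (graph_matrices p n d)) * real (p ^ d) / real (p ^ n) * (\<Sum>x\<in>Fvec p n. g x)^2"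
proof -
  have p0: "0 < p"
    using p prime_gt_0_nat by blast
  let ?Ms = "graph_matrices p n d" and ?V = "Fvec p n" and ?T = "\<Sum>x\<in>Fvec p n. g x"
  let ?c = "\<lambda>z. real (card {M \<in> ?Ms. z \<in> graph_subspace p n d M})"
  let ?K = "real (card ?Ms) * real (p ^ d) / real (p ^ n)"
  have fin: "finite ?V" "finite ?Ms"
    using p0 by (simp_all add: finite_Fvec finite_graph_matrices)
  have \<Phi>: "0 \<le> autocorr p n g z" if "z \<in> ?V" for z
    using that g p0 by (simp add: autocorr_nonneg)
  have c: "?c z \<le> ?K" if "z \<in> ?V - {vzero}" for z
  proof -
    have "p ^ (n - d) * card {M \<in> ?Ms. z \<in> graph_subspace p n d M} \<le> card ?Ms"
      using card_graph_matrices_containing[OF p, of z n d] that by simp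
    then have "real (p ^ (n - d) * card {M \<in> ?Ms. z \<in> graph_subspace p n d M}) \<le> real (card ?Ms)"
      by (rule of_nat_mono)
    then have "real (p ^ (n - d)) * ?c z \<le> real (card ?Ms)"
      by (simp only: of_nat_mult)
    moreover have "real (p ^ n) = real (p ^ d) * real (p ^ (n - d))"
      using d by (simp flip: power_add)
    ultimately show ?thesis
      using p0 by (simp add: field_simps)
  qed
  have "(\<Sum>M\<in>?Ms. \<Sum>z\<in>graph_subspace p n d M. autocorr p n g z) = (\<Sum>z\<in>?V. autocorr p n g z * ?c z)"
    using p0 by (rule sum_graph_subspaces_eq_sum_card)
  also have "\<dots> = autocorr p n g vzero * ?c vzero + (\<Sum>z\<in>?V - {vzero}. autocorr p n g z * ?c z)"
    using fin(1) vzero_Fvec[OF p0] by (rule sum.remove)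
  also have "\<dots> \<le> ?T * real (card ?Ms) + (\<Sum>z\<in>?V - {vzero}. autocorr p n g z * ?K)"
  proof (rule add_mono)
    have "?c vzero \<le> real (card ?Ms)"
      using fin(2) by (simp add: card_mono)
    then show "autocorr p n g vzero * ?c vzero \<le> ?T * real (card ?Ms)"
      using autocorr_vzero_le[OF g] \<Phi>[OF vzero_Fvec[OF p0]] by (intro mult_mono) auto
    show "(\<Sum>z\<in>?V - {vzero}. autocorr p n g z * ?c z) \<le> (\<Sum>z\<in>?V - {vzero}. autocorr p n g z * ?K)"
      using \<Phi> c by (intro sum_mono mult_left_mono) auto
  qed
  also have "\<dots> \<le> ?T * real (card ?Ms) + (\<Sum>z\<in>?V. autocorr p n g z * ?K)"
    using fin(1) \<Phi> by (intro add_left_mono sum_mono2) (auto simp: zero_le_mult_iff)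
  also have "\<dots> = ?T * real (card ?Ms) + ?K * ?T^2"
    by (simp only: sum_distrib_right[symmetric] sum_autocorr[OF p0] mult.commute)
  finally show ?thesis
    by (simp add: mult.commute)
qed

lemma sum_graph_matrices_coset_variance:
  assumes p: "prime p" and d: "d \<le> n" and g: "\<forall>m\<in>Fvec p n. 0 \<le> g m \<and> g m \<le> 1"
  shows "(\<Sum>M\<in>graph_matrices p n d. \<Sum>t\<in>Fvec p n.
            ((\<Sum>m\<in>translate p t (graph_subspace p n d M). g m) - expect p n g * real (p ^ d))^2)
           \<le> real (p ^ d) * (\<Sum>x\<in>Fvec p n. g x) * real (card (graph_matrices p n d))"
proof -
  have p0: "0 < p"
    using p prime_gt_0_nat by blast
  let ?Ms = "graph_matrices p n d" and ?q = "real (p ^ d)" and ?N = "real (p ^ n)"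
    and ?T = "\<Sum>x\<in>Fvec p n. g x"
  have "(\<Sum>M\<in>?Ms. \<Sum>t\<in>Fvec p n. ((\<Sum>m\<in>translate p t (graph_subspace p n d M). g m) - expect p n g * ?q)^2)
      = (\<Sum>M\<in>?Ms. ?q * (\<Sum>z\<in>graph_subspace p n d M. autocorr p n g z) - ?q^2 * ?T^2 / ?N)"
  proof (rule sum.cong[OF refl])
    fix M
    show "(\<Sum>t\<in>Fvec p n. ((\<Sum>m\<in>translate p t (graph_subspace p n d M). g m) - expect p n g * ?q)^2)
        = ?q * (\<Sum>z\<in>graph_subspace p n d M. autocorr p n g z) - ?q^2 * ?T^2 / ?N"
      using coset_sums_variance[OF p0 is_subspace_graph_subspace[OF p0, of n d M], of g]
      by (simp only: card_graph_subspace[OF p0 d])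
  qed
  also have "\<dots> = ?q * (\<Sum>M\<in>?Ms. \<Sum>z\<in>graph_subspace p n d M. autocorr p n g z)
                   - real (card ?Ms) * (?q^2 * ?T^2 / ?N)"
    by (simp add: sum_subtractf sum_distrib_left)
  also have "\<dots> \<le> ?q * (real (card ?Ms) * ?T + real (card ?Ms) * ?q / ?N * ?T^2)
                   - real (card ?Ms) * (?q^2 * ?T^2 / ?N)"
    using sum_autocorr_graph_subspaces[OF p d g] by (intro diff_right_mono mult_left_mono) auto
  also have "\<dots> = ?q * ?T * real (card ?Ms)"
    by (simp add: field_simps power2_eq_square)
  finally show ?thesis .
qed

lemma card_below_half_le:
  fixes S :: "'a \<Rightarrow> real"
  assumes "finite V" "0 < c"
  shows "real (card {t\<in>V. S t < c / 2}) * (c / 2)^2 \<le> (\<Sum>t\<in>V. (S t - c)^2)"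
proof -
  have "real (card {t\<in>V. S t < c / 2}) * (c / 2)^2 = (\<Sum>t\<in>{t\<in>V. S t < c / 2}. (c / 2)^2)"
    by simp
  also have "\<dots> \<le> (\<Sum>t\<in>{t\<in>V. S t < c / 2}. (S t - c)^2)"
  proof (rule sum_mono)
    fix t assume "t \<in> {t\<in>V. S t < c / 2}"
    then have "(c / 2)^2 \<le> (c - S t)^2"
      using assms(2) by (intro power_mono) auto
    then show "(c / 2)^2 \<le> (S t - c)^2"
      by (simp add: power2_commute)
  qed
  also have "\<dots> \<le> (\<Sum>t\<in>V. (S t - c)^2)"
    using assms(1) by (intro sum_mono2) auto
  finally show ?thesis .
qed

lemma card_unbalanced_graph_matrices:
  assumes p: "prime p" and d: "d \<le> n" and g: "\<forall>m\<in>Fvec p n. 0 \<le> g m \<and> g m \<le> 1"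
    and \<mu>: "0 < expect p n g"
  shows "real (card {M \<in> graph_matrices p n d.
            real (card {t \<in> Fvec p n. (\<Sum>m\<in>translate p t (graph_subspace p n d M). g m)
                                        \<ge> expect p n g * real (p ^ d) / 2}) < real (p ^ n) / 4})
           \<le> real (card (graph_matrices p n d)) * (16 / (3 * real (p ^ d) * expect p n g))"
proof -
  have p0: "0 < p"
    using p prime_gt_0_nat by blast
  let ?Ms = "graph_matrices p n d" and ?V = "Fvec p n" and ?N = "real (p ^ n)"
  let ?S = "\<lambda>M t. \<Sum>m\<in>translate p t (graph_subspace p n d M). g m"
  let ?c = "expect p n g * real (p ^ d)"
  let ?Y = "{M \<in> ?Ms. real (card {t \<in> ?V. ?S M t \<ge> ?c / 2}) < ?N / 4}"
  have c0: "0 < ?c"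
    using \<mu> p0 by simp
  have fin: "finite ?V" "finite ?Ms"
    using p0 by (simp_all add: finite_Fvec finite_graph_matrices)
  have low: "3 * ?N / 4 \<le> real (card {t \<in> ?V. ?S M t < ?c / 2})" if "M \<in> ?Y" for M
  proof -
    have "card {t \<in> ?V. ?S M t \<ge> ?c / 2} + card {t \<in> ?V. ?S M t < ?c / 2} = card ?V"
      using fin(1) by (subst card_Un_disjoint[symmetric]) (auto intro: arg_cong[where f = card])
    then have "real (card {t \<in> ?V. ?S M t \<ge> ?c / 2}) + real (card {t \<in> ?V. ?S M t < ?c / 2}) = ?N"
      unfolding card_Fvec by (simp only: of_nat_add[symmetric])
    with that show ?thesis
      by simp
  qed
  have "real (card ?Y) * (3 * ?N / 4 * (?c / 2)^2) = (\<Sum>M\<in>?Y. 3 * ?N / 4 * (?c / 2)^2)"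
    by simp
  also have "\<dots> \<le> (\<Sum>M\<in>?Y. real (card {t \<in> ?V. ?S M t < ?c / 2}) * (?c / 2)^2)"
    using low by (intro sum_mono mult_right_mono) auto
  also have "\<dots> \<le> (\<Sum>M\<in>?Ms. real (card {t \<in> ?V. ?S M t < ?c / 2}) * (?c / 2)^2)"
    using fin(2) by (intro sum_mono2) auto
  also have "\<dots> \<le> (\<Sum>M\<in>?Ms. \<Sum>t\<in>?V. (?S M t - ?c)^2)"
    by (intro sum_mono card_below_half_le[OF fin(1) c0])
  also have "\<dots> \<le> real (p ^ d) * (\<Sum>x\<in>?V. g x) * real (card ?Ms)"
    by (rule sum_graph_matrices_coset_variance[OF p d g])
  also have "\<dots> = real (card ?Ms) * (16 / (3 * real (p ^ d) * expect p n g)) * (3 * ?N / 4 * (?c / 2)^2)"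
    using p0 \<mu> by (simp add: expect_def field_simps power2_eq_square)
  finally show ?thesis
    by (rule mult_right_le_imp_le) (use c0 p0 in \<open>simp add: zero_less_mult_iff\<close>)
qed

section \<open>Choosing the subspace\<close>

lemma differences_inter_perp_graph_subspace:
  assumes p: "0 < p" and A: "A \<subseteq> Fvec p n" "A \<noteq> {}"
    and M: "\<not> (\<exists>a\<in>A. \<exists>b\<in>A. a \<noteq> b \<and> vsub p a b \<in> perp p n (graph_subspace p n d M))"
  shows "{vsub p a b | a b. a \<in> A \<and> b \<in> A} \<inter> perp p n (graph_subspace p n d M) = {vzero}"
proof
  show "{vsub p a b | a b. a \<in> A \<and> b \<in> A} \<inter> perp p n (graph_subspace p n d M) \<subseteq> {vzero}"
  proof
    fix x assume "x \<in> {vsub p a b | a b. a \<in> A \<and> b \<in> A} \<inter> perp p n (graph_subspace p n d M)"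
    then obtain a b where "a \<in> A" "b \<in> A" "x = vsub p a b" "x \<in> perp p n (graph_subspace p n d M)"
      by blast
    with M have "a = b"
      by blast
    with \<open>x = vsub p a b\<close> show "x \<in> {vzero}"
      by (simp add: vsub_self)
  qed
  obtain a where "a \<in> A"
    using A(2) by blast
  then have "vzero \<in> {vsub p a b | a b. a \<in> A \<and> b \<in> A}"
    by (metis (mono_tags, lifting) mem_Collect_eq vsub_self)
  moreover have "vzero \<in> perp p n (graph_subspace p n d M)"
    using vzero_Fvec[OF p] by (simp add: perp_def dotp_def vzero_def)
  ultimately show "{vzero} \<subseteq> {vsub p a b | a b. a \<in> A \<and> b \<in> A} \<inter> perp p n (graph_subspace p n d M)"
    by blast
qed

lemma exists_outside_small_sets:
  fixes x y :: real
  assumes S: "finite S" "S \<noteq> {}" and BU: "finite B" "finite U"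
    and card: "real (card B) \<le> real (card S) * x" "real (card U) \<le> real (card S) * y"
    and xy: "x + y < 1"
  shows "\<exists>s\<in>S. s \<notin> B \<and> s \<notin> U"
proof (rule ccontr)
  assume "\<not> (\<exists>s\<in>S. s \<notin> B \<and> s \<notin> U)"
  then have "card S \<le> card (B \<union> U)"
    using BU by (intro card_mono) auto
  also have "\<dots> \<le> card B + card U"
    by (rule card_Un_le)
  finally have "real (card S) \<le> real (card S) * (x + y)"
    using card by (simp add: distrib_left)
  moreover have "real (card S) * (x + y) < real (card S)"
    using S xy by (simp add: card_gt_0_iff mult_less_cancel_left2)
  ultimately show False
    by linarith
qed

lemma exists_graph_subspace_separating_and_balanced:
  assumes p: "prime p" and d: "d \<le> n" and g: "\<forall>m\<in>Fvec p n. 0 \<le> g m \<and> g m \<le> 1"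
    and A: "A \<subseteq> Fvec p n" "finite A" "A \<noteq> {}" and \<mu>: "0 < expect p n g"
    and small: "real (card A choose 2) / real (p ^ d) + 16 / (3 * real (p ^ d) * expect p n g) < 1"
  shows "\<exists>W. subspace_dim p n W d \<and>
           {vsub p a b | a b. a \<in> A \<and> b \<in> A} \<inter> perp p n W = {vzero} \<and>
           real (card {t \<in> Fvec p n. (\<Sum>m\<in>translate p t W. g m) \<ge> expect p n g * real (card W) / 2})
             \<ge> real (p ^ n) / 4"
proof -
  have p0: "0 < p"
    using p prime_gt_0_nat by blast
  let ?Ms = "graph_matrices p n d"
  define Bad where "Bad = {M \<in> ?Ms. \<exists>a\<in>A. \<exists>b\<in>A. a \<noteq> b \<and> vsub p a b \<in> perp p n (graph_subspace p n d M)}"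
  define Unbalanced where "Unbalanced = {M \<in> ?Ms.
    real (card {t \<in> Fvec p n. (\<Sum>m\<in>translate p t (graph_subspace p n d M). g m) \<ge> expect p n g * real (p ^ d) / 2})
      < real (p ^ n) / 4}"
  have "real (p ^ d) * real (card Bad) \<le> real (card A choose 2) * real (card ?Ms)"
    using card_graph_matrices_perp_difference[OF p d A(1,2)] unfolding Bad_def
    by (simp only: of_nat_mult[symmetric] of_nat_le_iff)
  then have Bad_card: "real (card Bad) \<le> real (card ?Ms) * (real (card A choose 2) / real (p ^ d))"
    using p0 by (simp add: field_simps)
  have Unbalanced_card: "real (card Unbalanced) \<le> real (card ?Ms) * (16 / (3 * real (p ^ d) * expect p n g))"
    unfolding Unbalanced_def by (rule card_unbalanced_graph_matrices[OF p d g \<mu>])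
  have fin: "finite ?Ms" "finite Bad" "finite Unbalanced"
    using finite_graph_matrices[OF p0] by (simp_all add: Bad_def Unbalanced_def)
  have "(\<lambda>_. 0) \<in> ?Ms"
    using p0 by (simp add: vecs_on_def)
  then obtain M where M: "M \<in> ?Ms" "M \<notin> Bad" "M \<notin> Unbalanced"
    using exists_outside_small_sets[OF fin(1) _ fin(2,3) Bad_card Unbalanced_card small] by blast
  show ?thesis
  proof (intro exI conjI)
    show "subspace_dim p n (graph_subspace p n d M) d"
      by (rule subspace_dim_graph_subspace[OF p0 d])
    show "{vsub p a b | a b. a \<in> A \<and> b \<in> A} \<inter> perp p n (graph_subspace p n d M) = {vzero}"
      using M unfolding Bad_def by (intro differences_inter_perp_graph_subspace[OF p0 A(1,3)]) blast
    show "real (card {t \<in> Fvec p n. (\<Sum>m\<in>translate p t (graph_subspace p n d M). g m)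
            \<ge> expect p n g * real (card (graph_subspace p n d M)) / 2}) \<ge> real (p ^ n) / 4"
      using M unfolding Unbalanced_def card_graph_subspace[OF p0 d] by simp
  qed
qed

lemma expect_le_1:
  assumes "0 < p" "\<forall>m\<in>Fvec p n. g m \<le> 1"
  shows "expect p n g \<le> 1"
proof -
  have "(\<Sum>m\<in>Fvec p n. g m) \<le> (\<Sum>m\<in>Fvec p n. 1)"
    using assms(2) by (intro sum_mono) auto
  then show ?thesis
    using assms(1) by (simp add: expect_def card_Fvec)
qed

lemma mult_le_power_of_ln_bound:
  fixes p C n' :: nat
  assumes p: "2 \<le> p" and C: "1 \<le> C" and n': "1 + ln (real C) / ln (real p) \<le> real n'"
  shows "real p * real C \<le> real (p ^ n')"
proof -
  have lp: "0 < ln (real p)"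
    using p by simp
  moreover have "0 \<le> ln (real C)"
    using C by simp
  ultimately have "0 \<le> ln (real C) / ln (real p)"
    by simp
  then have n'1: "1 \<le> n'"
    using n' by linarith
  have "ln (real C) / ln (real p) \<le> real (n' - 1)"
    using n' n'1 by (simp add: of_nat_diff)
  then have "ln (real C) \<le> real (n' - 1) * ln (real p)"
    using lp by (simp add: pos_divide_le_eq)
  also have "\<dots> = ln (real p ^ (n' - 1))"
    using p by (simp add: ln_realpow)
  finally have "real C \<le> real p ^ (n' - 1)"
    using C p by (subst (asm) ln_le_cancel_iff) auto
  then have "real p * real C \<le> real p * real p ^ (n' - 1)"
    by (rule mult_left_mono) simp
  also have "\<dots> = real p ^ n'"
    using n'1 by (simp flip: power_Suc)
  finally show ?thesis
    by simp
qed

lemma deviation_product_gt_16: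
  fixes p k q \<mu> :: real
  assumes p: "2 \<le> p" and k: "2 \<le> k" and q: "p * (k * (k - 1) / 2) \<le> q"
    and \<mu>: "8 / (sqrt p * k) < \<mu>" "\<mu> \<le> 1"
  shows "16 < q * \<mu>"
proof -
  define s where "s = sqrt p"
  have s: "s * s = p" "1 \<le> s"
    unfolding s_def using p by simp_all
  have sk0: "0 < s * k"
    using s k by simp
  have "8 < \<mu> * (s * k)"
    using \<mu>(1) sk0 unfolding s_def by (simp only: pos_divide_less_eq)
  then have sk\<mu>: "8 < s * k * \<mu>"
    by (simp only: mult.commute)
  have "0 < s * k * \<mu>"
    using sk\<mu> by linarith
  then have \<mu>0: "0 < \<mu>"
    using sk0 by (rule zero_less_mult_pos)
  have "s * k * \<mu> \<le> s * k"
    using \<mu>(2) sk0 by (intro mult_left_le) auto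
  with sk\<mu> have "8 < s * k"
    by linarith
  moreover have "s * 2 \<le> s * k"
    using s k by simp
  ultimately have "4 < s * k - s"
    by linarith
  then have "2 < s * (k - 1) / 2"
    by (simp add: right_diff_distrib)
  then have "8 * 2 < (s * k * \<mu>) * (s * (k - 1) / 2)"
    using sk\<mu> by (intro mult_strict_mono) auto
  also have "\<dots> = p * (k * (k - 1) / 2) * \<mu>"
    by (simp add: s(1)[symmetric] algebra_simps)
  also have "\<dots> \<le> q * \<mu>"
    using q \<mu>0 by (intro mult_right_mono) auto
  finally show ?thesis
    by simp
qed

lemma pair_and_deviation_terms_lt_1:
  fixes p k q \<mu> :: real
  assumes p: "2 \<le> p" and k: "2 \<le> k" and q: "p * (k * (k - 1) / 2) \<le> q"
    and \<mu>: "8 / (sqrt p * k) < \<mu>" "\<mu> \<le> 1"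
  shows "k * (k - 1) / 2 / q + 16 / (3 * q * \<mu>) < 1"
proof -
  have q\<mu>: "16 < q * \<mu>"
    using assms by (rule deviation_product_gt_16)
  have C0: "0 < k * (k - 1) / 2"
    using k by simp
  then have pC0: "0 < p * (k * (k - 1) / 2)"
    using p by simp
  have "k * (k - 1) / 2 / q \<le> k * (k - 1) / 2 / (p * (k * (k - 1) / 2))"
    using q pC0 C0 by (intro divide_left_mono) simp_all
  also have "\<dots> = 1 / p"
    using C0 by (intro nonzero_divide_mult_cancel_right) linarith
  also have "\<dots> \<le> 1 / 2"
    using p by simp
  finally have "k * (k - 1) / 2 / q \<le> 1 / 2" .
  moreover have "16 / (3 * q * \<mu>) < 1 / 3"
    using q\<mu> by (simp add: field_simps)
  ultimately show ?thesis
    by linarith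
qed

theorem corollary2:
  fixes p n k n' :: nat and f g :: "(nat \<Rightarrow> int) \<Rightarrow> real" and A :: "(nat \<Rightarrow> int) set"
  assumes "prime p" and "n \<ge> 1"
    and "\<forall>m\<in>Fvec p n. 0 \<le> f m \<and> f m \<le> 1"
    and "\<forall>m\<in>Fvec p n. 0 \<le> g m \<and> g m \<le> 1"
    and "2 \<le> k" and "k \<le> p ^ n"
    and "A \<subseteq> Fvec p n" and "card A = k"
    and "\<forall>a\<in>A. \<forall>b\<in>Fvec p n - A. cmod (fourier p n f a) \<ge> cmod (fourier p n f b)"
    and "1 + ln (real (k choose 2)) / ln (real p) \<le> real n'"
    and "real n' < 2 + ln (real (k choose 2)) / ln (real p)"
    and "n' \<le> n"
    and "expect p n g > 8 / (sqrt (real p) * real k)"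
  shows "\<exists>W. subspace_dim p n W n' \<and>
           {vsub p a b | a b. a \<in> A \<and> b \<in> A} \<inter> perp p n W = {vzero} \<and>
           real (card {t \<in> Fvec p n. (\<Sum>m\<in>translate p t W. g m) \<ge> expect p n g * real (card W) / 2})
             \<ge> real (p ^ n) / 4"
proof -
  note p = assms(1) and g = assms(4) and k = assms(5) and A = assms(7,8)
  have p2: "2 \<le> p"
    using p prime_ge_2_nat by blast
  have A_fin: "finite A" "A \<noteq> {}"
    using A k card.infinite by fastforce+
  have "0 < 8 / (sqrt (real p) * real k)"
    using p2 k by simp
  with assms(13) have \<mu>: "0 < expect p n g"
    by linarith
  have q: "real p * real (k choose 2) \<le> real (p ^ n')"
    using k assms(10) by (intro mult_le_power_of_ln_bound[OF p2]) (simp_all add: zero_less_binomial Suc_leI)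
  have choose: "real (k choose 2) = real k * (real k - 1) / 2"
    using k by (simp add: choose_two of_nat_diff field_char_0_class.of_nat_div)
  have "real k * (real k - 1) / 2 / real (p ^ n') + 16 / (3 * real (p ^ n') * expect p n g) < 1"
    using p2 k q choose assms(13) expect_le_1[of p n g] g by (intro pair_and_deviation_terms_lt_1) simp_all
  then have "real (k choose 2) / real (p ^ n') + 16 / (3 * real (p ^ n') * expect p n g) < 1"
    by (simp only: choose)
  then show ?thesis
    using exists_graph_subspace_separating_and_balanced[OF p assms(12) g A(1) A_fin \<mu>] A(2)
    by simp
qed

end
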